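(* Let $r>0$ and let $z\colon[0,r)\to[0,r)$ be a homeomorphism with $(\alpha)z>\alpha$ for all $\alpha\in(0,r)$. Let $f$ be a permutation of $[0,r)$ such that $f$ commutes with $z$, $f$ is (right-)continuous at $0$, and $f$ has finitely many points of discontinuity. Then $f$ is continuous (for the usual topology).
   Context: Maps act on the right: $(\alpha)z$ is the image of $\alpha$ under $z$, and $fz$ means "first $f$, then $z$". *)

theory Defs
  imports "HOL-Analysis.Analysis"
begin

end

theory Submission
  imports Defs
begin

(* Let D be the set of points of S = [0,r) at which f is discontinuous.
   Since f commutes with the homeomorphism z, on S we have f = z\<inverse> \<circ> f \<circ> z, so
   continuity of f at z x forces continuity of f at x; equivalently D is mapped
   into itself by z.  By hypothesis 0 \<notin> D, so z moves every point of D strictly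
   upwards.  A finite set that is mapped into itself by a map moving each of its
   points strictly upwards must be empty: z would send its maximum above the
   maximum.  Hence D = {} and f is continuous on S.
   The file proves the conjugation step for arbitrary metric spaces, derives the
   invariance of the discontinuity set, proves the order-theoretic emptiness
   lemma for arbitrary linear orders, and combines them in lemma3p1. *)

text \<open>If a map f on S commutes with a self-homeomorphism z of S, continuity of f
  at the image point z x implies continuity of f at x, because f agrees on S
  with the composite z' \<circ> f \<circ> z of maps continuous at x.\<close>

lemma continuous_within_conjugate_back:
  fixes f z z' :: "'a::metric_space \<Rightarrow> 'a"
  assumes hom: "homeomorphism S S z z'"
    and fS: "f ` S \<subseteq> S"
    and comm: "\<forall>y\<in>S. f (z y) = z (f y)"
    and x: "x \<in> S"
    and cont: "continuous (at (z x) within S) f"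
  shows "continuous (at x within S) f"
proof -
  have zS: "z ` S = S" and z'_z: "\<forall>y\<in>S. z' (z y) = y"
    and cz: "continuous_on S z" and cz': "continuous_on S z'"
    using hom unfolding homeomorphism_def by auto
  have "continuous (at x within S) z"
    using cz x continuous_on_eq_continuous_within by blast
  then have cfz: "continuous (at x within S) (\<lambda>y. f (z y))"
    by (rule continuous_within_compose2) (simp add: zS cont)
  have "continuous (at (f (z x)) within S) z'"
    using cz' x zS fS continuous_on_eq_continuous_within by blast
  moreover have "(\<lambda>y. f (z y)) ` S \<subseteq> S" using fS zS by auto
  ultimately have cz'fz: "continuous (at x within S) (\<lambda>y. z' (f (z y)))"
    using continuous_within_compose2[OF cfz] continuous_within_subset by blast
  have conj: "\<forall>y\<in>S. z' (f (z y)) = f y"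
    using comm z'_z fS by auto
  show ?thesis
    by (rule continuous_transform_within[OF cz'fz zero_less_one x]) (use conj in auto)
qed

lemma discontinuities_invariant:
  fixes f z :: "'a::metric_space \<Rightarrow> 'a"
  assumes "homeomorphism S S z z'" "f ` S \<subseteq> S" "\<forall>y\<in>S. f (z y) = z (f y)"
    and "x \<in> {x \<in> S. \<not> continuous (at x within S) f}"
  shows "z x \<in> {x \<in> S. \<not> continuous (at x within S) f}"
  using assms continuous_within_conjugate_back[OF assms(1-3)] homeomorphism_image1[OF assms(1)]
  by blast

lemma finite_invariant_increasing_empty:
  fixes D :: "'a::linorder set"
  assumes "finite D" and "\<forall>x\<in>D. z x \<in> D \<and> x < z x"
  shows "D = {}"
proof (rule ccontr)
  assume "D \<noteq> {}"
  then have "Max D \<in> D" using assms(1) by simp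
  then have "z (Max D) \<in> D" and "Max D < z (Max D)" using assms(2) by auto
  then show False using Max_ge[OF assms(1)] by (simp add: not_le[symmetric])
qed

theorem lemma3p1:
  fixes r :: real and z f :: "real \<Rightarrow> real"
  assumes "r > 0"
    and "\<exists>z'. homeomorphism {0..<r} {0..<r} z z'"
    and "\<forall>\<alpha>\<in>{0<..<r}. z \<alpha> > \<alpha>"
    and "bij_betw f {0..<r} {0..<r}"
    and "\<forall>x\<in>{0..<r}. f (z x) = z (f x)"
    and "continuous (at 0 within {0..<r}) f"
    and "finite {x \<in> {0..<r}. \<not> continuous (at x within {0..<r}) f}"
  shows "continuous_on {0..<r} f"
proof -
  define D where "D = {x \<in> {0..<r}. \<not> continuous (at x within {0..<r}) f}"
  obtain z' where hom: "homeomorphism {0..<r} {0..<r} z z'" using assms(2) by blast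
  have fS: "f ` {0..<r} \<subseteq> {0..<r}" using assms(4) by (simp add: bij_betw_def)
  have "D \<subseteq> {0<..<r}"
    using assms(6) unfolding D_def by (force simp: order_le_less)
  then have "\<forall>x\<in>D. z x \<in> D \<and> x < z x"
    using discontinuities_invariant[OF hom fS assms(5)] assms(3) unfolding D_def by blast
  then have "D = {}"
    using finite_invariant_increasing_empty assms(7) unfolding D_def by blast
  then show ?thesis
    unfolding continuous_on_eq_continuous_within D_def by auto
qed

end
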